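(* For every integer $n\ge 2$ and every $s\in\mathbb{N}$, $\mathrm{ML}(1,2,\ldots,n-1,ns)=\frac{s}{ns+1}$.
   Context: For a real number $x$, $\Vert x\Vert$ denotes the distance from $x$ to the nearest integer. For positive integers $v_1,\ldots,v_n$, the maximum loneliness is $\mathrm{ML}(v_1,\ldots,v_n)=\max_{t\in\mathbb{R}}\min_{1\le i\le n}\Vert t v_i\Vert$. Here $\mathbb{N}=\{1,2,3,\ldots\}$. *)

theory Defs
  imports "HOL-Analysis.Analysis"
begin

definition dist_int :: "real \<Rightarrow> real" where
  "dist_int x = (INF k::int. \<bar>x - real_of_int k\<bar>)"

text \<open>Maximum loneliness of the velocities in a (nonempty) list v:
  max loneliness(v_1..v_n) = max over t of min over i of dist_int (t * v_i).
  The maximum is attained; we write it as the supremum.\<close>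
definition max_loneliness :: "nat list \<Rightarrow> real" where
  "max_loneliness vs = (SUP t::real. Min ((\<lambda>v. dist_int (t * real v)) ` set vs))"

end

theory Submission
  imports Defs
begin

text \<open>Let \<open>d = s/(ns+1)\<close>. At time \<open>t = d\<close> the speeds \<open>k < n\<close> sit in \<open>[d, 1 - d]\<close> and
  \<open>ns\<close> sits at \<open>s - d\<close>, so the maximum loneliness is at least \<open>d\<close>.
  Conversely, suppose \<open>\<parallel>tk\<parallel> > d\<close> for all \<open>1 \<le> k < n\<close>; replacing \<open>t\<close> by \<open>-t\<close> we may
  assume \<open>y = frac(tn) \<le> 1/2\<close>, so \<open>y = \<parallel>tn\<parallel>\<close>. The \<open>n + 1\<close> numbers
  \<open>1, frac(t), ..., frac(tn)\<close> are pairwise more than \<open>d\<close> apart, because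
  \<open>|frac(ti) - frac(tj)| \<ge> \<parallel>t(i - j)\<parallel>\<close>, and they lie in \<open>[min y d, 1]\<close>, so
  \<open>nd < 1 - min y d\<close>. If \<open>y > d\<close> this says \<open>(n + 1)s < ns + 1\<close>, which is absurd;
  otherwise it says \<open>y < 1/(ns+1)\<close>, whence \<open>\<parallel>tns\<parallel> \<le> sy < d\<close>.\<close>

lemma dist_int_le: "dist_int x \<le> \<bar>x - of_int k\<bar>"
  unfolding dist_int_def by (rule cINF_lower) (auto intro: bdd_belowI[of _ 0])

lemma dist_int_geI:
  assumes "of_int m + d \<le> x" "x \<le> of_int m + 1 - d"
  shows "d \<le> dist_int x"
  unfolding dist_int_def
proof (rule cINF_greatest)
  fix k :: int
  show "d \<le> \<bar>x - of_int k\<bar>"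
  proof (cases "k \<le> m")
    case True
    then have "real_of_int k \<le> of_int m" by linarith
    then show ?thesis using assms(1) by linarith
  next
    case False
    then have "real_of_int m + 1 \<le> of_int k" by linarith
    then show ?thesis using assms(2) by linarith
  qed
qed simp

lemma dist_int_eq_min_frac: "dist_int x = min (frac x) (1 - frac x)"
proof (rule order.antisym)
  show "dist_int x \<le> min (frac x) (1 - frac x)"
    using dist_int_le[of x "\<lfloor>x\<rfloor>"] dist_int_le[of x "\<lfloor>x\<rfloor> + 1"] by (simp add: frac_def)
  show "min (frac x) (1 - frac x) \<le> dist_int x"
    by (rule dist_int_geI[of "\<lfloor>x\<rfloor>"]) (auto simp: frac_def)
qed

lemma dist_int_attained: obtains k where "dist_int x = \<bar>x - of_int k\<bar>"
proof (cases "frac x \<le> 1 - frac x")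
  case True
  then show ?thesis using that[of "\<lfloor>x\<rfloor>"] by (simp add: dist_int_eq_min_frac frac_def)
next
  case False
  then show ?thesis using that[of "\<lfloor>x\<rfloor> + 1"] by (simp add: dist_int_eq_min_frac frac_def)
qed

lemma dist_int_minus [simp]: "dist_int (- x) = dist_int x"
proof -
  have le: "dist_int (- y) \<le> dist_int y" for y
  proof -
    obtain k where "dist_int y = \<bar>y - of_int k\<bar>" by (rule dist_int_attained)
    then show ?thesis using dist_int_le[of "- y" "- k"] by simp
  qed
  show ?thesis using le[of x] le[of "- x"] by simp
qed

lemma dist_int_of_nat_mult_le: "dist_int (of_nat s * x) \<le> of_nat s * dist_int x"
proof -
  obtain k where "dist_int x = \<bar>x - of_int k\<bar>" by (rule dist_int_attained)
  moreover have "\<bar>of_nat s * x - of_int (int s * k)\<bar> = of_nat s * \<bar>x - of_int k\<bar>"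
    by (simp add: abs_mult flip: right_diff_distrib)
  ultimately show ?thesis using dist_int_le[of "of_nat s * x" "int s * k"] by simp
qed

lemma dist_int_le_frac_diff: "dist_int (x - y) \<le> \<bar>frac x - frac y\<bar>"
proof -
  have "frac x - frac y = (x - y) - of_int (\<lfloor>x\<rfloor> - \<lfloor>y\<rfloor>)" by (simp add: frac_def)
  then show ?thesis using dist_int_le[of "x - y" "\<lfloor>x\<rfloor> - \<lfloor>y\<rfloor>"] by simp
qed

lemma separated_set_spread:
  fixes S :: "real set"
  assumes "finite S" "2 \<le> card S" "\<And>x y. x \<in> S \<Longrightarrow> y \<in> S \<Longrightarrow> x < y \<Longrightarrow> d < y - x"
  shows "real (card S - 1) * d < Max S - Min S"
  using assms
proof (induction "card S" arbitrary: S rule: less_induct)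
  case less
  define M where "M = Max S"
  define S' where "S' = S - {M}"
  have "M \<in> S" unfolding M_def using less.prems Max_in by fastforce
  then have card_S': "card S' = card S - 1" and "finite S'"
    unfolding S'_def using less.prems by auto
  then have "S' \<noteq> {}" using less.prems(2) by auto
  then have "Max S' \<in> S'" using \<open>finite S'\<close> by simp
  then have "Max S' < M" unfolding S'_def M_def using less.prems Max_ge by fastforce
  then have gap: "d < M - Max S'"
    using less.prems(3) \<open>M \<in> S\<close> \<open>Max S' \<in> S'\<close> unfolding S'_def by blast
  have "Min S \<le> Min S'"
    using \<open>finite S'\<close> \<open>S' \<noteq> {}\<close> unfolding S'_def by (simp add: Min_antimono)
  show ?case
  proof (cases "card S = 2")
    case True
    then obtain x where "S' = {x}" using card_S' by (auto simp: card_1_singleton_iff)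
    then show ?thesis using gap \<open>Min S \<le> Min S'\<close> True unfolding M_def by simp
  next
    case False
    then have "real (card S' - 1) * d < Max S' - Min S'"
      using less.hyps[of S'] less.prems card_S' \<open>finite S'\<close> unfolding S'_def by auto
    moreover have "real (card S - 1) = real (card S' - 1) + 1"
      using card_S' False less.prems(2) by simp
    ultimately show ?thesis using gap \<open>Min S \<le> Min S'\<close> unfolding M_def by (simp add: algebra_simps)
  qed
qed

lemma separated_points_spread:
  fixes p :: "nat \<Rightarrow> real"
  assumes "1 \<le> N" "0 \<le> d" "\<And>i. i \<le> N \<Longrightarrow> a \<le> p i \<and> p i \<le> b"
    and sep: "\<And>i j. j < i \<Longrightarrow> i \<le> N \<Longrightarrow> d < \<bar>p i - p j\<bar>"
  shows "real N * d < b - a"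
proof -
  have sep': "d < \<bar>p i - p j\<bar>" if "i \<le> N" "j \<le> N" "i \<noteq> j" for i j
    using that sep[of i j] sep[of j i] by (cases "j < i") (auto simp: abs_minus_commute)
  define S where "S = p ` {..N}"
  have "inj_on p {..N}"
    using sep' \<open>0 \<le> d\<close> by (force intro: inj_onI)
  then have card_S: "card S = N + 1" unfolding S_def by (simp add: card_image)
  have "real (card S - 1) * d < Max S - Min S"
  proof (rule separated_set_spread)
    fix x y assume "x \<in> S" "y \<in> S" "x < y"
    then show "d < y - x" unfolding S_def using sep' by fastforce
  qed (use card_S \<open>1 \<le> N\<close> in \<open>auto simp: S_def\<close>)
  moreover have "Max S \<le> b" "a \<le> Min S" unfolding S_def using assms(3) by auto
  ultimately show ?thesis using card_S by simp
qed

lemma max_loneliness_eqI: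
  assumes "vs \<noteq> []"
    and "\<And>t. \<exists>v\<in>set vs. dist_int (t * real v) \<le> d"
    and "\<And>v. v \<in> set vs \<Longrightarrow> d \<le> dist_int (t\<^sub>0 * real v)"
  shows "max_loneliness vs = d"
proof -
  define F where "F t = Min ((\<lambda>v. dist_int (t * real v)) ` set vs)" for t
  have "F t \<le> d" for t
    unfolding F_def using assms(2)[of t] by (subst Min_le_iff) auto
  moreover have "d \<le> F t\<^sub>0"
    unfolding F_def using assms(1,3) by (subst Min_ge_iff) auto
  ultimately have "d \<in> range F" by (metis order.antisym rangeI)
  then show ?thesis
    unfolding max_loneliness_def F_def[symmetric] using \<open>\<And>t. F t \<le> d\<close>
    by (auto intro: cSup_eq_maximum)
qed

lemma dist_int_top_speed_le_of_frac_le_half: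
  fixes n s :: nat and t :: real
  defines "d \<equiv> real s / real (n * s + 1)"
  assumes "2 \<le> n" "1 \<le> s" and frac_le: "frac (t * real n) \<le> 1/2"
    and lonely: "\<And>k. 1 \<le> k \<Longrightarrow> k < n \<Longrightarrow> d < dist_int (t * real k)"
  shows "dist_int (t * real (n * s)) \<le> d"
proof (rule ccontr)
  assume contra: "\<not> dist_int (t * real (n * s)) \<le> d"
  define q where "q = real n * real s + 1"
  define y where "y = frac (t * real n)"
  have q_pos: "0 < q" unfolding q_def by (simp add: add_nonneg_pos)
  have d_q: "d = real s / q" unfolding q_def d_def by simp
  have "2 * real s \<le> real n * real s"
    by (rule mult_right_mono) (use \<open>2 \<le> n\<close> in auto)
  then have "d < 1/2" unfolding d_q q_def using q_pos by (simp add: field_simps)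
  have "d < dist_int (real s * (t * real n))"
    using contra by (simp add: mult_ac)
  also have "\<dots> \<le> real s * y"
    using dist_int_of_nat_mult_le[of s "t * real n"] frac_le
    by (simp add: y_def dist_int_eq_min_frac)
  finally have "1 < q * y"
    unfolding d_q using q_pos \<open>1 \<le> s\<close> by (simp add: field_simps)
  define p where "p k = (if k = 0 then 1 else frac (t * real k))" for k
  have "real n * d < 1 - min y d"
  proof (rule separated_points_spread[where p = p])
    fix i assume "i \<le> n"
    have "d < frac (t * real i)" if "1 \<le> i" "i < n"
      using lonely[OF that] dist_int_eq_min_frac[of "t * real i"] by linarith
    then show "min y d \<le> p i \<and> p i \<le> 1"
      using \<open>i \<le> n\<close> frac_lt_1[of "t * real i"] frac_le
      by (cases "i = n") (auto simp: p_def y_def)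
  next
    fix i j assume "j < i" "i \<le> n"
    show "d < \<bar>p i - p j\<bar>"
    proof (cases "j = 0")
      case True
      have "d < 1 - frac (t * real i)" if "i < n"
        using lonely[of i] \<open>j < i\<close> that dist_int_eq_min_frac[of "t * real i"] by simp
      then show ?thesis
        using True \<open>j < i\<close> \<open>i \<le> n\<close> \<open>d < 1/2\<close> frac_le frac_lt_1[of "t * real i"]
        by (cases "i = n") (auto simp: p_def)
    next
      case False
      have "t * real i - t * real j = t * real (i - j)"
        using \<open>j < i\<close> by (simp add: of_nat_diff right_diff_distrib)
      then have "d < dist_int (t * real i - t * real j)"
        using lonely[of "i - j"] \<open>j < i\<close> \<open>i \<le> n\<close> False by simp
      then show ?thesis
        using dist_int_le_frac_diff[of "t * real i" "t * real j"] False \<open>j < i\<close>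
        by (simp add: p_def)
    qed
  qed (use \<open>2 \<le> n\<close> d_q q_pos in auto)
  then show False
  proof (cases "y \<le> d")
    case True
    with \<open>real n * d < 1 - min y d\<close> have "real n * real s < q - q * y"
      unfolding d_q using q_pos by (simp add: field_simps)
    then show False using \<open>1 < q * y\<close> unfolding q_def by simp
  next
    case False
    with \<open>real n * d < 1 - min y d\<close> have "(real n + 1) * real s < q"
      unfolding d_q using q_pos by (simp add: field_simps)
    then show False using \<open>1 \<le> s\<close> unfolding q_def by (simp add: algebra_simps)
  qed
qed

lemma dist_int_top_speed_le:
  fixes n s :: nat and t :: real
  defines "d \<equiv> real s / real (n * s + 1)"
  assumes "2 \<le> n" "1 \<le> s"
    and lonely: "\<And>k. 1 \<le> k \<Longrightarrow> k < n \<Longrightarrow> d < dist_int (t * real k)"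
  shows "dist_int (t * real (n * s)) \<le> d"
proof (cases "frac (t * real n) \<le> 1/2")
  case True
  then show ?thesis
    using dist_int_top_speed_le_of_frac_le_half assms by blast
next
  case False
  then have "frac (t * real n) \<noteq> 0" by linarith
  then have "t * real n \<notin> \<int>" by (simp add: frac_eq_0_iff)
  then have "frac (- t * real n) \<le> 1/2" using False by (simp add: frac_neg)
  then have "dist_int (- t * real (n * s)) \<le> d"
    using dist_int_top_speed_le_of_frac_le_half[of n s "- t"] assms by simp
  then show ?thesis by simp
qed

lemma dist_int_at_witness_time:
  fixes n s v :: nat
  defines "d \<equiv> real s / real (n * s + 1)"
  assumes "2 \<le> n" "1 \<le> s" "v \<in> set ([1..<n] @ [n * s])"
  shows "d \<le> dist_int (d * real v)"
proof -
  have q_pos: "0 < real n * real s + 1" by (simp add: add_nonneg_pos)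
  have d_q: "d = real s / (real n * real s + 1)" unfolding d_def by simp
  show ?thesis
  proof (cases "v = n * s")
    case True
    have "2 * real s \<le> real n * real s"
      by (rule mult_right_mono) (use \<open>2 \<le> n\<close> in auto)
    then have "2 * d \<le> 1" unfolding d_q using q_pos by (simp add: field_simps)
    moreover have "d * real v = real s - d"
      unfolding True d_q using q_pos by (simp add: field_simps)
    ultimately show ?thesis by (intro dist_int_geI[of "int s - 1"]) auto
  next
    case False
    then have "1 \<le> v" "v + 1 \<le> n" using assms(4) by auto
    have "d * 1 \<le> d * real v"
      using \<open>1 \<le> v\<close> by (intro mult_left_mono) (auto simp: d_def)
    have "real s * (real v + 1) \<le> real s * real n"
      using \<open>v + 1 \<le> n\<close> by (intro mult_left_mono) auto
    then have "real s * (real v + 1) / (real n * real s + 1) \<le> 1"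
      using q_pos by (simp add: mult.commute)
    moreover have "d * real v + d = real s * (real v + 1) / (real n * real s + 1)"
      unfolding d_q by (simp add: algebra_simps add_divide_distrib)
    ultimately have "d * real v \<le> 1 - d" by linarith
    with \<open>d * 1 \<le> d * real v\<close> show ?thesis by (intro dist_int_geI[of 0]) auto
  qed
qed

theorem theorem5p1:
  fixes n s :: nat
  assumes "n \<ge> 2" and "s \<ge> 1"
  shows "max_loneliness ([1..<n] @ [n * s]) = real s / real (n * s + 1)"
proof (rule max_loneliness_eqI[where t\<^sub>0 = "real s / real (n * s + 1)"])
  let ?d = "real s / real (n * s + 1)"
  fix t
  show "\<exists>v\<in>set ([1..<n] @ [n * s]). dist_int (t * real v) \<le> ?d"
  proof (cases "\<forall>k\<in>{1..<n}. ?d < dist_int (t * real k)")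
    case True
    then show ?thesis using dist_int_top_speed_le[of n s t] assms by auto
  next
    case False
    then show ?thesis by (auto simp: not_less)
  qed
qed (use dist_int_at_witness_time assms in auto)

end
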